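(* Let $F\in\mathcal{DM}^\infty(H\Omega)$ and let $E\Subset\Omega$ be a set of finite h-perimeter in $\Omega$. Then $$\operatorname{div}F(E^{1,F})=\int_{\partial^*_HE}\mathrm{Tr}_i(F,\partial^*_HE)\,d|D_H\chi_E|,\qquad \operatorname{div}F(E^{1,F}\cup\partial^*_HE)=\int_{\partial^*_HE}\mathrm{Tr}_e(F,\partial^*_HE)\,d|D_H\chi_E|.$$
   Context: Setting and notation. $\mathbb G$ is a stratified group: a connected, simply connected nilpotent Lie group whose Lie algebra admits a stratification $\mathfrak g=V_1\oplus\cdots\oplus V_\iota$ with $[V_1,V_j]=V_{j+1}$, $V_\iota\neq\{0\}$, $V_{\iota+1}=\{0\}$; via exponential (graded) coordinates $\mathbb G$ is identified with $\mathbb R^q$. $X_1,\dots,X_m$ ($m=\dim V_1$) are the left invariant horizontal vector fields agreeing at $0$ with a graded basis of $V_1$; horizontal fibres $H_p\mathbb G=\mathrm{span}\{X_1(p),\dots,X_m(p)\}$ carry the left invariant scalar product $\langle\cdot,\cdot\rangle$ making $X_1,\dots,X_m$ orthonormal, norm $|\cdot|$. The Haar measure $\mu$ is $\mathcal L^q$ ($dx$). $d$ is a fixed homogeneous distance, $B(x,r)=\{y:d(y,x)<r\}$. $\Omega\subset\mathbb G$ is open. Horizontal calculus. For a function $\varphi$, $\nabla_H\varphi=\sum_{j=1}^m(X_j\varphi)X_j$. A horizontal field is a measurable section $F=\sum_{j=1}^mF_jX_j$ of $H\Omega$; $L^p(H\Omega)$ those with $|F|\in L^p(\Omega)$; $C^1_c(H\Omega)$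 those with $C^1$ compactly supported coefficients. The divergence of $F\in L^1_{loc}(H\Omega)$ is the distribution $\varphi\mapsto-\int_\Omega\langle F,\nabla_H\varphi\rangle\,dx$. $\mathcal{DM}^p(H\Omega)$ is the space of $F\in L^p(H\Omega)$ whose divergence is a finite signed Radon measure $\operatorname{div}F$ on $\Omega$. BV and perimeter. For $f\in L^1_{loc}(\Omega)$ let $|D_Hf|(\Omega)=\sup\{\int_\Omega f\operatorname{div}\phi\,dx:\phi\in C^1_c(H\Omega),|\phi|\le1\}$. If finite, $|D_Hf|$ is a finite Radon measure and there is a $|D_Hf|$-measurable horizontal section $\sigma_f$ with $|\sigma_f|=1$ a.e. and $\int f\operatorname{div}\phi\,dx=-\int\langle\phi,\sigma_f\rangle\,d|D_Hf|$. $E$ has finite h-perimeter in $\Omega$ if $|D_H\chi_E|(\Omega)<\infty$; $\nu_E=-\sigma_{\chi_E}$ is the measure theoretic exterior horizontal normal. The reduced boundary $\partial^*_HE$ is the set of $x$ with $|D_H\chi_E|(B(x,r))>0$ for all $r>0$ such that $\lim_{r\to0}|D_H\chi_E|(B(x,r))^{-1}\int_{B(x,r)}\nu_E\,d|D_H\chi_E|$ exists and has norm $1$. Normal traces. For $F\in\mathcal{DM}^\infty(H\Omega)$ and $E\subset\Omega$ of finite h-perimeter in $\Omega$, there exist (as established in the paper) a $|\operatorname{div}F|$-measurable set $E^{1,F}\subset\Omega\setminus\partial^*_HE$, unique up to $|\operatorname{div}F|$-null sets, and functions $\mathrm{Tr}_i(F,\partial^*_HE),\mathrm{Tr}_e(F,\partial^*_HE)\in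 L^\infty(\partial^*_HE;|D_H\chi_E|)$, unique up to $|D_H\chi_E|$-null sets, such that as measures on $\Omega$: $\operatorname{div}(\chi_EF)=\chi_{E^{1,F}}\operatorname{div}F-\mathrm{Tr}_i(F,\partial^*_HE)|D_H\chi_E|$ and $\operatorname{div}(\chi_EF)=\chi_{E^{1,F}\cup\partial^*_HE}\operatorname{div}F-\mathrm{Tr}_e(F,\partial^*_HE)|D_H\chi_E|$. $E^{1,F}$ is the measure theoretic interior of $E$ with respect to $F$; $\mathrm{Tr}_i,\mathrm{Tr}_e$ are the interior and exterior normal traces. *)

theory Defs
  imports "HOL-Analysis.Analysis"
begin

text \<open>The Lie algebra is modelled on real^'n with Lie bracket br; the coordinate
  axis vectors form a graded basis, coordinate i having degree deg i.
  V_k is the span of the basis vectors of degree k.\<close>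

definition layer :: "('n::finite \<Rightarrow> nat) \<Rightarrow> nat \<Rightarrow> (real^'n) set" where
  "layer deg k = span {axis i 1 | i. deg i = k}"

definition step :: "('n::finite \<Rightarrow> nat) \<Rightarrow> nat" where
  "step deg = Max (range deg)"

definition stratified ::
  "(real^'n::finite \<Rightarrow> real^'n \<Rightarrow> real^'n) \<Rightarrow> ('n \<Rightarrow> nat) \<Rightarrow> bool" where
  "stratified br deg \<longleftrightarrow>
     bilinear br \<and>
     (\<forall>x y. br x y = - br y x) \<and>
     (\<forall>x y z. br x (br y z) + br y (br z x) + br z (br x y) = 0) \<and>
     (\<forall>i. deg i \<ge> 1) \<and>
     (\<forall>j\<ge>1. span {br v w | v w. v \<in> layer deg 1 \<and> w \<in> layer deg j} = layer deg (Suc j))"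

text \<open>Right-nested bracket of a word in the letters X (True) and Y (False).\<close>
fun nestbr :: "('v \<Rightarrow> 'v \<Rightarrow> 'v) \<Rightarrow> 'v \<Rightarrow> 'v \<Rightarrow> bool list \<Rightarrow> 'v::zero" where
  "nestbr b x y [] = 0"
| "nestbr b x y [a] = (if a then x else y)"
| "nestbr b x y (a # w) = b (if a then x else y) (nestbr b x y w)"

definition dynkin_terms :: "nat \<Rightarrow> (nat \<times> nat) list set" where
  "dynkin_terms N = {ps. ps \<noteq> [] \<and> (\<forall>p\<in>set ps. fst p + snd p \<ge> 1)
                        \<and> sum_list (map (\<lambda>p. fst p + snd p) ps) \<le> N}"

definition dynkin_word :: "(nat \<times> nat) list \<Rightarrow> bool list" where
  "dynkin_word ps = concat (map (\<lambda>(r, s). replicate r True @ replicate s False) ps)"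

definition dynkin_coeff :: "(nat \<times> nat) list \<Rightarrow> real" where
  "dynkin_coeff ps = (-1) ^ (length ps - 1) /
     (real (length ps) * real (sum_list (map (\<lambda>p. fst p + snd p) ps))
       * (\<Prod>p\<leftarrow>ps. fact (fst p) * fact (snd p)))"

text \<open>Group law in exponential coordinates: Baker-Campbell-Hausdorff series
  (Dynkin's form), truncated at the step (it is exact for a nilpotent algebra of that step).\<close>
definition gmul ::
  "(real^'n::finite \<Rightarrow> real^'n \<Rightarrow> real^'n) \<Rightarrow> ('n \<Rightarrow> nat) \<Rightarrow> real^'n \<Rightarrow> real^'n \<Rightarrow> real^'n" where
  "gmul br deg x y = (\<Sum>ps\<in>dynkin_terms (step deg). dynkin_coeff ps *\<^sub>R nestbr br x y (dynkin_word ps))"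

definition dil :: "('n::finite \<Rightarrow> nat) \<Rightarrow> real \<Rightarrow> real^'n \<Rightarrow> real^'n" where
  "dil deg t x = (\<chi> i. t ^ deg i * x $ i)"

definition hom_dist ::
  "(real^'n::finite \<Rightarrow> real^'n \<Rightarrow> real^'n) \<Rightarrow> ('n \<Rightarrow> nat) \<Rightarrow> (real^'n \<Rightarrow> real^'n \<Rightarrow> real) \<Rightarrow> bool" where
  "hom_dist br deg d \<longleftrightarrow>
     (\<forall>x y. d x y = 0 \<longleftrightarrow> x = y) \<and> (\<forall>x y. d x y = d y x) \<and>
     (\<forall>x y z. d x z \<le> d x y + d y z) \<and>
     continuous_on UNIV (\<lambda>p. d (fst p) (snd p)) \<and>
     (\<forall>x y z. d (gmul br deg z x) (gmul br deg z y) = d x y) \<and>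
     (\<forall>t>0. \<forall>x y. d (dil deg t x) (dil deg t y) = t * d x y)"

text \<open>Horizontal indices: coordinates of degree 1. X_j acts on a function g by
  (X_j g)(p) = d/dt g(p * exp(t e_j)) at t = 0; in exponential coordinates exp(t e_j) = t e_j.\<close>
definition Xd ::
  "(real^'n::finite \<Rightarrow> real^'n \<Rightarrow> real^'n) \<Rightarrow> ('n \<Rightarrow> nat) \<Rightarrow> 'n \<Rightarrow> (real^'n \<Rightarrow> real) \<Rightarrow> real^'n \<Rightarrow> real" where
  "Xd br deg j g p = deriv (\<lambda>t. g (gmul br deg p (t *\<^sub>R axis j 1))) 0"

text \<open>Horizontal sections are represented by maps into real^'n whose non-horizontal
  coordinates vanish; coordinate j (deg j = 1) is the coefficient of X_j, so the
  Euclidean norm / inner product coincide with the left invariant ones.\<close>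
definition horizontal :: "('n::finite \<Rightarrow> nat) \<Rightarrow> real^'n \<Rightarrow> bool" where
  "horizontal deg v \<longleftrightarrow> (\<forall>i. deg i \<noteq> 1 \<longrightarrow> v $ i = 0)"

definition hpair ::
  "(real^'n::finite \<Rightarrow> real^'n \<Rightarrow> real^'n) \<Rightarrow> ('n \<Rightarrow> nat) \<Rightarrow> (real^'n \<Rightarrow> real^'n) \<Rightarrow> (real^'n \<Rightarrow> real) \<Rightarrow> real^'n \<Rightarrow> real" where
  "hpair br deg F g x = (\<Sum>j\<in>{j. deg j = 1}. F x $ j * Xd br deg j g x)"

definition hdiv ::
  "(real^'n::finite \<Rightarrow> real^'n \<Rightarrow> real^'n) \<Rightarrow> ('n \<Rightarrow> nat) \<Rightarrow> (real^'n \<Rightarrow> real^'n) \<Rightarrow> real^'n \<Rightarrow> real" where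
  "hdiv br deg \<phi> x = (\<Sum>j\<in>{j. deg j = 1}. Xd br deg j (\<lambda>y. \<phi> y $ j) x)"

definition C1c :: "(real^'n::finite) set \<Rightarrow> (real^'n \<Rightarrow> real) \<Rightarrow> bool" where
  "C1c U g \<longleftrightarrow>
     (\<exists>D. (\<forall>x. (g has_derivative (\<lambda>h. D x \<bullet> h)) (at x)) \<and> continuous_on UNIV D) \<and>
     compact (closure {x. g x \<noteq> 0}) \<and> closure {x. g x \<noteq> 0} \<subseteq> U"

definition C1c_hfield :: "('n::finite \<Rightarrow> nat) \<Rightarrow> (real^'n) set \<Rightarrow> (real^'n \<Rightarrow> real^'n) \<Rightarrow> bool" where
  "C1c_hfield deg U \<phi> \<longleftrightarrow> (\<forall>x. horizontal deg (\<phi> x)) \<and> (\<forall>i. C1c U (\<lambda>x. \<phi> x $ i))"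

definition hvar ::
  "(real^'n::finite \<Rightarrow> real^'n \<Rightarrow> real^'n) \<Rightarrow> ('n \<Rightarrow> nat) \<Rightarrow> (real^'n \<Rightarrow> real) \<Rightarrow> (real^'n) set \<Rightarrow> ennreal" where
  "hvar br deg f U = (SUP \<phi>\<in>{\<phi>. C1c_hfield deg U \<phi> \<and> (\<forall>x. norm (\<phi> x) \<le> 1)}.
                        ennreal (\<integral>x. f x * hdiv br deg \<phi> x \<partial>lebesgue))"

definition hvar_measure ::
  "(real^'n::finite \<Rightarrow> real^'n \<Rightarrow> real^'n) \<Rightarrow> ('n \<Rightarrow> nat) \<Rightarrow> (real^'n) set \<Rightarrow> (real^'n \<Rightarrow> real) \<Rightarrow> (real^'n) measure" where
  "hvar_measure br deg \<Omega> f = measure_of \<Omega> (sets (restrict_space lborel \<Omega>))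
      (\<lambda>A. INF U\<in>{U. open U \<and> A \<subseteq> U \<and> U \<subseteq> \<Omega>}. hvar br deg f U)"

text \<open>Reduced boundary, relative to the variation measure lam of chi_E and
  the exterior normal nu.\<close>
definition red_bdry ::
  "(real^'n::finite) set \<Rightarrow> (real^'n \<Rightarrow> real^'n \<Rightarrow> real) \<Rightarrow> (real^'n) measure \<Rightarrow> (real^'n \<Rightarrow> real^'n) \<Rightarrow> (real^'n) set" where
  "red_bdry \<Omega> d lam \<nu> = {x\<in>\<Omega>.
      (\<forall>r>0. measure lam ({y. d y x < r} \<inter> \<Omega>) > 0) \<and>
      (\<exists>v. ((\<lambda>r. (1 / measure lam ({y. d y x < r} \<inter> \<Omega>)) *\<^sub>R
                  (\<integral>y\<in>{y. d y x < r} \<inter> \<Omega>. \<nu> y \<partial>lam)) \<longlongrightarrow> v) (at_right 0)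
           \<and> norm v = 1)}"

text \<open>F \<in> DM^\<infinity>(H\<Omega>), with div F = mu_p - mu_n the Jordan decomposition
  (mu_p, mu_n finite Borel measures on \<Omega>, mutually singular).\<close>
definition DM_inf ::
  "(real^'n::finite \<Rightarrow> real^'n \<Rightarrow> real^'n) \<Rightarrow> ('n \<Rightarrow> nat) \<Rightarrow> (real^'n) set \<Rightarrow> (real^'n \<Rightarrow> real^'n)
     \<Rightarrow> (real^'n) measure \<Rightarrow> (real^'n) measure \<Rightarrow> bool" where
  "DM_inf br deg \<Omega> F mup mun \<longleftrightarrow>
     F \<in> borel_measurable lebesgue \<and> (\<forall>x\<in>\<Omega>. horizontal deg (F x)) \<and>
     (\<exists>C. AE x in lebesgue. x \<in> \<Omega> \<longrightarrow> norm (F x) \<le> C) \<and>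
     space mup = \<Omega> \<and> sets mup = sets (restrict_space lborel \<Omega>) \<and> finite_measure mup \<and>
     space mun = \<Omega> \<and> sets mun = sets (restrict_space lborel \<Omega>) \<and> finite_measure mun \<and>
     (\<exists>P\<in>sets mup. emeasure mup (\<Omega> - P) = 0 \<and> emeasure mun P = 0) \<and>
     (\<forall>g. C1c \<Omega> g \<longrightarrow>
        - (\<integral>x. indicator \<Omega> x * hpair br deg F g x \<partial>lebesgue)
          = (\<integral>x. g x \<partial>mup) - (\<integral>x. g x \<partial>mun))"

end

theory Submission
  imports Defs
begin

text \<open>Test both trace identities against a \<open>C\<^sup>1\<close> cut-off \<open>g\<close> that is compactly supported in \<open>\<Omega>\<close>
  and equal to \<open>1\<close> near \<open>closure E\<close>. The horizontal derivatives of \<open>g\<close> vanish on \<open>E\<close>, so the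
  left-hand side \<open>\<integral>\<^sub>E \<langle>F, \<nabla>\<^sub>H g\<rangle>\<close> is zero. The variation measure of \<open>\<chi>\<^sub>E\<close> vanishes on open sets
  missing \<open>E\<close>, hence the reduced boundary lies in \<open>closure E\<close> and \<open>g\<close> drops out of the boundary
  integral. Finally, testing the interior identity with cut-offs supported away from \<open>closure E\<close>
  shows that the positive and negative parts of \<open>div F\<close> agree on \<open>E1 - closure E\<close>; being mutually
  singular, both vanish there, so the volume terms reduce to \<open>div F\<close> of \<open>E1\<close> and of
  \<open>E1 \<union> red_bdry \<dots>\<close>.\<close>

section \<open>The group law near the identity\<close>

lemma skew_self_eq_0:
  fixes b :: "'a \<Rightarrow> 'a \<Rightarrow> 'b::real_vector"
  assumes "\<forall>x y. b x y = - b y x"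
  shows "b x x = 0"
proof -
  have "b x x = - b x x"
    using assms by blast
  then have "2 *\<^sub>R b x x = 0"
    by (metis scaleR_2 neg_eq_iff_add_eq_0)
  then show ?thesis
    by simp
qed

lemma nestbr_right_zero:
  fixes b :: "'a::real_vector \<Rightarrow> 'a \<Rightarrow> 'a"
  assumes b: "bilinear b" and skew: "\<forall>x y. b x y = - b y x"
  shows "nestbr b x 0 w = (if w = [True] then x else 0)"
proof (induction w)
  case (Cons a w)
  then show ?case
    by (cases w) (auto simp: bilinear_lzero[OF b] bilinear_rzero[OF b] skew_self_eq_0[OF skew])
qed simp

lemma length_dynkin_word: "length (dynkin_word ps) = (\<Sum>p\<leftarrow>ps. fst p + snd p)"
  by (induction ps) (auto simp: dynkin_word_def)

lemma length_le_dynkin_weight: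
  assumes "\<forall>p\<in>set ps. fst p + snd p \<ge> (1::nat)"
  shows "length ps \<le> (\<Sum>p\<leftarrow>ps. fst p + snd p)"
  using assms by (induction ps) auto

lemma dynkin_word_eq_single_iff:
  assumes "ps \<in> dynkin_terms N"
  shows "dynkin_word ps = [True] \<longleftrightarrow> ps = [(1, 0)]"
proof
  assume w: "dynkin_word ps = [True]"
  obtain p qs where ps: "ps = p # qs" and weights: "\<forall>p\<in>set ps. fst p + snd p \<ge> 1"
    using assms by (cases ps) (auto simp: dynkin_terms_def)
  have "(\<Sum>p\<leftarrow>ps. fst p + snd p) = 1"
    using w length_dynkin_word[of ps] by simp
  then have "fst p + snd p + (\<Sum>p\<leftarrow>qs. fst p + snd p) = 1"
    using ps by simp
  moreover have "length qs \<le> (\<Sum>p\<leftarrow>qs. fst p + snd p)" "fst p + snd p \<ge> 1"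
    using length_le_dynkin_weight[of qs] weights ps by auto
  ultimately have "length qs = 0" and "fst p + snd p = 1"
    by linarith+
  obtain r s where p: "p = (r, s)"
    by fastforce
  with \<open>fst p + snd p = 1\<close> consider "r = 1" "s = 0" | "r = 0" "s = 1"
    by (cases r) auto
  then show "ps = [(1, 0)]"
    using w ps p \<open>length qs = 0\<close> by cases (simp_all add: dynkin_word_def)
qed (simp add: dynkin_word_def)

lemma finite_dynkin_terms: "finite (dynkin_terms N)"
proof (rule finite_subset)
  show "dynkin_terms N \<subseteq> {ps. set ps \<subseteq> {0..N} \<times> {0..N} \<and> length ps \<le> N}"
  proof safe
    fix ps assume ps: "ps \<in> dynkin_terms N"
    then show "length ps \<le> N"
      using length_le_dynkin_weight[of ps] by (auto simp: dynkin_terms_def)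
    fix r s assume "(r, s) \<in> set ps"
    then have "r + s \<le> (\<Sum>p\<leftarrow>ps. fst p + snd p)"
      using member_le_sum_list[of "r + s" "map (\<lambda>p. fst p + snd p) ps"] by force
    with ps show "r \<in> {0..N}" "s \<in> {0..N}"
      by (auto simp: dynkin_terms_def)
  qed
  show "finite {ps. set ps \<subseteq> {0..N} \<times> {0..N} \<and> length ps \<le> N}"
    by (rule finite_lists_length_le) blast
qed

lemma step_ge_1:
  assumes "stratified br deg"
  shows "step deg \<ge> 1"
proof -
  have "deg undefined \<ge> 1"
    using assms unfolding stratified_def by blast
  also have "deg undefined \<le> Max (range deg)"
    by (rule Max_ge) auto
  finally show ?thesis
    unfolding step_def .
qed

lemma gmul_right_zero:
  assumes G: "stratified br deg"
  shows "gmul br deg x 0 = x"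
proof -
  have b: "bilinear br" and skew: "\<forall>x y. br x y = - br y x"
    using G unfolding stratified_def by blast+
  have "[(1, 0)] \<in> dynkin_terms (step deg)"
    using step_ge_1[OF G] by (simp add: dynkin_terms_def)
  moreover have "dynkin_coeff ps *\<^sub>R nestbr br x 0 (dynkin_word ps) = (if ps = [(1, 0)] then x else 0)"
    if "ps \<in> dynkin_terms (step deg)" for ps
    using dynkin_word_eq_single_iff[OF that] nestbr_right_zero[OF b skew]
    by (auto simp: dynkin_coeff_def dynkin_word_def)
  ultimately show ?thesis
    unfolding gmul_def by (simp add: sum.delta' finite_dynkin_terms cong: sum.cong)
qed

lemma continuous_on_nestbr_line:
  assumes "bounded_bilinear b"
  shows "continuous_on UNIV (\<lambda>t::real. nestbr b x (t *\<^sub>R v) w)"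
proof (induction w)
  case (Cons a w)
  have "continuous_on UNIV (\<lambda>t::real. if a then x else t *\<^sub>R v)"
    by (cases a) (auto intro!: continuous_intros)
  with Cons.IH show ?case
    by (cases w) (auto intro: bounded_bilinear.continuous_on[OF assms])
qed simp

lemma continuous_on_gmul_line:
  assumes "stratified br deg"
  shows "continuous_on UNIV (\<lambda>t::real. gmul br deg x (t *\<^sub>R v))"
proof -
  have "bounded_bilinear br"
    using assms by (simp add: stratified_def bilinear_conv_bounded_bilinear)
  then show ?thesis
    unfolding gmul_def by (intro continuous_intros continuous_on_nestbr_line)
qed

lemma Xd_locally_constant:
  assumes G: "stratified br deg" and U: "open U" "x \<in> U" and const: "\<And>y. y \<in> U \<Longrightarrow> g y = c"
  shows "Xd br deg j g x = 0"
proof -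
  let ?\<gamma> = "\<lambda>t::real. gmul br deg x (t *\<^sub>R axis j 1)"
  have "isCont ?\<gamma> 0"
    using continuous_on_gmul_line[OF G] by (simp add: continuous_on_eq_continuous_at)
  then have "?\<gamma> \<midarrow>0\<rightarrow> x"
    using gmul_right_zero[OF G] by (simp add: isCont_def)
  from topological_tendstoD[OF this U] have "\<forall>\<^sub>F t in nhds 0. t \<noteq> 0 \<longrightarrow> ?\<gamma> t \<in> U"
    by (simp add: eventually_at_filter)
  then have "\<forall>\<^sub>F t in nhds 0. g (?\<gamma> t) = c"
    by eventually_elim (use gmul_right_zero[OF G] U(2) const in auto)
  then have "((\<lambda>t. g (?\<gamma> t)) has_real_derivative 0) (at 0)"
    using DERIV_cong_ev[OF refl _ refl, of "\<lambda>t. g (?\<gamma> t)" "\<lambda>_. c"] by simp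
  then show ?thesis
    unfolding Xd_def by (rule DERIV_imp_deriv)
qed

section \<open>\<open>C\<^sup>1\<close> cut-off functions\<close>

lemma max0_sq_linearization_error: "\<bar>(max 0 s)\<^sup>2 - (max 0 t)\<^sup>2 - 2 * max 0 t * (s - t)\<bar> \<le> ((s::real) - t)\<^sup>2"
proof (cases "0 \<le> s"; cases "0 \<le> t")
  assume "0 \<le> s" "0 \<le> t"
  then have "(max 0 s)\<^sup>2 - (max 0 t)\<^sup>2 - 2 * max 0 t * (s - t) = (s - t)\<^sup>2"
    by (simp add: power2_eq_square algebra_simps)
  then show ?thesis by simp
next
  assume s: "\<not> 0 \<le> s" and t: "0 \<le> t"
  then have "(max 0 s)\<^sup>2 - (max 0 t)\<^sup>2 - 2 * max 0 t * (s - t) = t * (t - 2 * s)"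
    by (simp add: power2_eq_square algebra_simps)
  moreover have "(s - t)\<^sup>2 = s\<^sup>2 + t * (t - 2 * s)"
    by (simp add: power2_eq_square algebra_simps)
  moreover have "0 \<le> t * (t - 2 * s)"
    using s t by simp
  ultimately show ?thesis
    by (smt (verit) zero_le_power2)
next
  assume s: "0 \<le> s" and t: "\<not> 0 \<le> t"
  then have "(max 0 s)\<^sup>2 - (max 0 t)\<^sup>2 - 2 * max 0 t * (s - t) = s\<^sup>2"
    by simp
  moreover have "(s - t)\<^sup>2 = s\<^sup>2 + t * (t - 2 * s)"
    by (simp add: power2_eq_square algebra_simps)
  moreover have "0 \<le> t * (t - 2 * s)"
    using s t by (intro mult_nonpos_nonpos) auto
  ultimately show ?thesis
    by (smt (verit) zero_le_power2)
qed simp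

lemma has_real_derivative_max0_sq: "((\<lambda>t. (max 0 t)\<^sup>2) has_real_derivative 2 * max 0 t) (at t)"
proof -
  have "((\<lambda>s. ((max 0 s)\<^sup>2 - (max 0 t)\<^sup>2) / (s - t) - 2 * max 0 t) \<longlongrightarrow> 0) (at t)"
  proof (rule Lim_null_comparison)
    show "\<forall>\<^sub>F s in at t. norm (((max 0 s)\<^sup>2 - (max 0 t)\<^sup>2) / (s - t) - 2 * max 0 t) \<le> \<bar>s - t\<bar>"
    proof (rule eventually_at_filter[THEN iffD2, OF always_eventually], intro allI impI)
      fix s assume "s \<noteq> t"
      then have "((max 0 s)\<^sup>2 - (max 0 t)\<^sup>2) / (s - t) - 2 * max 0 t
          = ((max 0 s)\<^sup>2 - (max 0 t)\<^sup>2 - 2 * max 0 t * (s - t)) / (s - t)"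
        by (simp add: field_simps)
      also have "\<bar>\<dots>\<bar> \<le> (s - t)\<^sup>2 / \<bar>s - t\<bar>"
        using max0_sq_linearization_error[of s t] by (simp add: abs_divide divide_right_mono)
      also have "\<dots> = \<bar>s - t\<bar>"
        using \<open>s \<noteq> t\<close>
        by (metis abs_eq_0 eq_iff_diff_eq_0 nonzero_mult_div_cancel_left power2_abs power2_eq_square)
      finally show "norm (((max 0 s)\<^sup>2 - (max 0 t)\<^sup>2) / (s - t) - 2 * max 0 t) \<le> \<bar>s - t\<bar>"
        by simp
    qed
    show "((\<lambda>s. \<bar>s - t\<bar>) \<longlongrightarrow> 0) (at t)"
      by (intro tendsto_eq_intros) auto
  qed
  then show ?thesis
    unfolding has_field_derivative_iff by (rule Lim_null[THEN iffD2])
qed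

lemma has_real_derivative_max0_sq_shift:
  "((\<lambda>t. (max 0 (t - c))\<^sup>2) has_real_derivative 2 * max 0 (t - c)) (at t)"
proof -
  have "((\<lambda>t. t - c) has_real_derivative 1) (at t)"
    by (auto intro!: derivative_eq_intros)
  from DERIV_chain2[OF has_real_derivative_max0_sq this] show ?thesis
    by simp
qed

definition smooth_step :: "real \<Rightarrow> real" where
  "smooth_step t = 2 * ((max 0 t)\<^sup>2 - 2 * (max 0 (t - 1/2))\<^sup>2 + (max 0 (t - 1))\<^sup>2)"

lemma smooth_step_C1: "smooth_step C1_differentiable_on UNIV"
proof -
  define D where "D t = 2 * (2 * max 0 t - 2 * (2 * max 0 (t - 1/2)) + 2 * max 0 (t - 1))" for t :: real
  have "(smooth_step has_real_derivative D t) (at t)" for t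
    unfolding smooth_step_def[abs_def] D_def
    by (intro DERIV_cmult DERIV_add DERIV_diff has_real_derivative_max0_sq
        has_real_derivative_max0_sq_shift)
  moreover have "continuous_on UNIV D"
    unfolding D_def by (intro continuous_intros)
  ultimately show ?thesis
    unfolding C1_differentiable_on_def has_real_derivative_iff_has_vector_derivative by blast
qed

lemma smooth_step_eq_0: "t \<le> 0 \<Longrightarrow> smooth_step t = 0"
  by (simp add: smooth_step_def)

lemma smooth_step_eq_1: "t \<ge> 1 \<Longrightarrow> smooth_step t = 1"
  by (simp add: smooth_step_def max_def power2_eq_square algebra_simps)

lemma smooth_step_bounds: "0 \<le> smooth_step t" "smooth_step t \<le> 1"
proof -
  consider "t \<le> 0" | "0 \<le> t" "t \<le> 1/2" | "1/2 \<le> t" "t \<le> 1" | "1 \<le> t"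
    by linarith
  then have "0 \<le> smooth_step t \<and> smooth_step t \<le> 1"
  proof cases
    case 2
    then have "smooth_step t = 2 * t\<^sup>2" and "t\<^sup>2 \<le> (1/2)\<^sup>2"
      by (auto simp: smooth_step_def max_def intro: power_mono)
    then show ?thesis by (simp add: power2_eq_square)
  next
    case 3
    then have "smooth_step t = 1 - 2 * (1 - t)\<^sup>2"
      by (simp add: smooth_step_def max_def power2_eq_square algebra_simps)
    moreover have "(1 - t)\<^sup>2 \<le> (1/2)\<^sup>2"
      using 3 by (intro power_mono) auto
    ultimately show ?thesis by (simp add: power2_eq_square)
  qed (simp_all add: smooth_step_eq_0 smooth_step_eq_1)
  then show "0 \<le> smooth_step t" "smooth_step t \<le> 1"
    by auto
qed

definition C1_function :: "('a::real_inner \<Rightarrow> real) \<Rightarrow> bool" where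
  "C1_function g \<longleftrightarrow> (\<exists>D. (\<forall>x. (g has_derivative (\<lambda>h. D x \<bullet> h)) (at x)) \<and> continuous_on UNIV D)"

lemma C1_function_imp_continuous_on: "C1_function g \<Longrightarrow> continuous_on UNIV g"
  unfolding C1_function_def
  by (metis continuous_at_imp_continuous_on has_derivative_continuous)

lemma C1_function_const: "C1_function (\<lambda>x. c)"
  unfolding C1_function_def
  by (rule exI[of _ "\<lambda>_. 0"]) (auto intro!: has_derivative_eq_rhs[OF has_derivative_const] simp: fun_eq_iff)

lemma C1_function_diff:
  assumes "C1_function f" "C1_function g"
  shows "C1_function (\<lambda>x. f x - g x)"
proof -
  obtain Df Dg where f: "\<And>x. (f has_derivative (\<lambda>h. Df x \<bullet> h)) (at x)" "continuous_on UNIV Df"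
    and g: "\<And>x. (g has_derivative (\<lambda>h. Dg x \<bullet> h)) (at x)" "continuous_on UNIV Dg"
    using assms unfolding C1_function_def by blast
  show ?thesis
    unfolding C1_function_def
    by (rule exI[of _ "\<lambda>x. Df x - Dg x"])
      (auto intro!: continuous_intros f g has_derivative_eq_rhs[OF has_derivative_diff] simp: inner_diff_left)
qed

lemma C1_function_mult:
  assumes "C1_function f" "C1_function g"
  shows "C1_function (\<lambda>x. f x * g x)"
proof -
  obtain Df Dg where f: "\<And>x. (f has_derivative (\<lambda>h. Df x \<bullet> h)) (at x)" "continuous_on UNIV Df"
    and g: "\<And>x. (g has_derivative (\<lambda>h. Dg x \<bullet> h)) (at x)" "continuous_on UNIV Dg"
    using assms unfolding C1_function_def by blast
  have "continuous_on UNIV f" "continuous_on UNIV g"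
    using assms by (simp_all add: C1_function_imp_continuous_on)
  then show ?thesis
    unfolding C1_function_def
    by (intro exI[of _ "\<lambda>x. f x *\<^sub>R Dg x + g x *\<^sub>R Df x"] conjI allI
        has_derivative_eq_rhs[OF has_derivative_mult[OF f(1) g(1)]])
      (auto intro!: continuous_intros f g simp: inner_add_left algebra_simps)
qed

lemma C1_function_prod:
  "finite I \<Longrightarrow> (\<And>i. i \<in> I \<Longrightarrow> C1_function (f i)) \<Longrightarrow> C1_function (\<lambda>x. \<Prod>i\<in>I. f i x)"
  by (induction I rule: finite_induct) (auto intro: C1_function_const C1_function_mult)

lemma C1_function_compose:
  assumes f: "f C1_differentiable_on UNIV" and g: "C1_function g"
  shows "C1_function (\<lambda>x. f (g x))"
proof -
  obtain Df where Df: "\<And>t. (f has_real_derivative Df t) (at t)" "continuous_on UNIV Df"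
    using f unfolding C1_differentiable_on_def has_real_derivative_iff_has_vector_derivative by blast
  obtain Dg where Dg: "\<And>x. (g has_derivative (\<lambda>h. Dg x \<bullet> h)) (at x)" "continuous_on UNIV Dg"
    using g unfolding C1_function_def by blast
  have "continuous_on UNIV (\<lambda>x. Df (g x))"
    using continuous_on_compose2[OF Df(2) C1_function_imp_continuous_on[OF g]] by simp
  then show ?thesis
    unfolding C1_function_def
    by (intro exI[of _ "\<lambda>x. Df (g x) *\<^sub>R Dg x"] conjI allI
        has_derivative_eq_rhs[OF DERIV_compose_FDERIV[OF Df(1) Dg(1)]])
      (auto intro!: continuous_intros Dg(2) simp: mult.commute)
qed

lemma C1_function_norm_sq: "C1_function (\<lambda>y. (norm (y - x))\<^sup>2)"
  unfolding C1_function_def power2_norm_eq_inner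
  by (rule exI[of _ "\<lambda>y. 2 *\<^sub>R (y - x)"])
    (auto intro!: derivative_eq_intros continuous_intros simp: inner_commute algebra_simps)

definition bump :: "'a::real_inner \<Rightarrow> real \<Rightarrow> 'a \<Rightarrow> real" where
  "bump x r y = smooth_step (2 - 2 / r\<^sup>2 * (norm (y - x))\<^sup>2)"

lemma C1_function_bump: "C1_function (bump x r)"
proof -
  have "(\<lambda>t. 2 - 2 / r\<^sup>2 * t) C1_differentiable_on UNIV"
    by (intro C1_differentiable_on_diff C1_differentiable_on_mult C1_differentiable_on_const
        C1_differentiable_on_ident)
  from C1_function_compose[OF this C1_function_norm_sq] show ?thesis
    unfolding bump_def[abs_def] by (rule C1_function_compose[OF smooth_step_C1])
qed

lemma bump_eq_1:
  assumes "r > 0" "norm (y - x) \<le> r / 2"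
  shows "bump x r y = 1"
proof -
  have "(norm (y - x))\<^sup>2 \<le> (r / 2)\<^sup>2"
    using assms by (intro power_mono) auto
  then have "(norm (y - x))\<^sup>2 * 4 \<le> r\<^sup>2"
    by (simp add: power_divide)
  then have "2 * (norm (y - x))\<^sup>2 \<le> r\<^sup>2"
    using zero_le_power2[of "norm (y - x)"] by linarith
  then have "1 \<le> 2 - 2 / r\<^sup>2 * (norm (y - x))\<^sup>2"
    using assms(1) by (simp add: field_simps)
  then show ?thesis
    unfolding bump_def by (rule smooth_step_eq_1)
qed

lemma bump_eq_0:
  assumes "r > 0" "r \<le> norm (y - x)"
  shows "bump x r y = 0"
proof -
  have "r\<^sup>2 \<le> (norm (y - x))\<^sup>2"
    using assms by (intro power_mono) auto
  then have "2 - 2 / r\<^sup>2 * (norm (y - x))\<^sup>2 \<le> 0"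
    using assms(1) by (simp add: field_simps)
  then show ?thesis
    unfolding bump_def by (rule smooth_step_eq_0)
qed

lemma bump_bounds: "0 \<le> bump x r y" "bump x r y \<le> 1"
  unfolding bump_def by (rule smooth_step_bounds)+

lemma C1_plateau:
  fixes K U :: "'a::euclidean_space set"
  assumes K: "compact K" and U: "open U" "K \<subseteq> U"
  obtains g V C where "C1_function g" "compact C" "C \<subseteq> U" "{x. g x \<noteq> 0} \<subseteq> C"
    "open V" "K \<subseteq> V" "\<And>x. x \<in> V \<Longrightarrow> g x = 1" "\<And>x. 0 \<le> g x" "\<And>x. g x \<le> 1"
proof -
  have "\<forall>x\<in>K. \<exists>r>0. cball x r \<subseteq> U"
    using U open_contains_cball by blast
  then obtain r where r: "\<And>x. x \<in> K \<Longrightarrow> r x > 0 \<and> cball x (r x) \<subseteq> U"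
    by metis
  have "K \<subseteq> (\<Union>x\<in>K. ball x (r x / 2))"
    using r by force
  then obtain F where F: "F \<subseteq> K" "finite F" "K \<subseteq> (\<Union>x\<in>F. ball x (r x / 2))"
    using compactE_image[OF K, of K "\<lambda>x. ball x (r x / 2)"] by blast
  define g where "g y = 1 - (\<Prod>x\<in>F. 1 - bump x (r x) y)" for y
  have factor_bounds: "0 \<le> 1 - bump x (r x) y" "1 - bump x (r x) y \<le> 1" for x y
    using bump_bounds[of x "r x" y] by auto
  show ?thesis
  proof
    show "C1_function g"
      unfolding g_def[abs_def]
      by (intro C1_function_diff C1_function_const C1_function_prod F C1_function_bump)
    show "compact (\<Union>x\<in>F. cball x (r x))" "(\<Union>x\<in>F. cball x (r x)) \<subseteq> U"
      using F r by auto
    show "{y. g y \<noteq> 0} \<subseteq> (\<Union>x\<in>F. cball x (r x))"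
    proof safe
      fix y assume "g y \<noteq> 0"
      then have "(\<Prod>x\<in>F. 1 - bump x (r x) y) \<noteq> 1"
        unfolding g_def by simp
      then obtain x where x: "x \<in> F" "bump x (r x) y \<noteq> 0"
        using prod.neutral by force
      have "r x > 0"
        using F(1) r x(1) by blast
      then have "\<not> r x \<le> norm (y - x)"
        using bump_eq_0 x(2) by blast
      then have "y \<in> cball x (r x)"
        by (simp add: dist_norm norm_minus_commute)
      with x(1) show "y \<in> (\<Union>x\<in>F. cball x (r x))"
        by blast
    qed
    show "open (\<Union>x\<in>F. ball x (r x / 2))" "K \<subseteq> (\<Union>x\<in>F. ball x (r x / 2))"
      using F by auto
    show "g y = 1" if y: "y \<in> (\<Union>x\<in>F. ball x (r x / 2))" for y
    proof -
      obtain x where "x \<in> F" "y \<in> ball x (r x / 2)"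
        using y by blast
      moreover have "r x > 0"
        using F(1) r calculation(1) by blast
      ultimately have "bump x (r x) y = 1"
        by (intro bump_eq_1) (auto simp: dist_norm norm_minus_commute)
      with \<open>x \<in> F\<close> F(2) have "(\<Prod>x\<in>F. 1 - bump x (r x) y) = 0"
        by (intro prod_zero) auto
      then show ?thesis
        unfolding g_def by simp
    qed
    show "0 \<le> g y" "g y \<le> 1" for y
      unfolding g_def using factor_bounds by (auto intro: prod_nonneg prod_le_1)
  qed
qed

lemma C1_approx_indicator_open:
  fixes U :: "'a::euclidean_space set"
  assumes U: "open U"
  obtains h :: "nat \<Rightarrow> 'a \<Rightarrow> real" where "\<And>k. C1_function (h k)"
    "\<And>k. \<exists>C. compact C \<and> C \<subseteq> U \<and> {x. h k x \<noteq> 0} \<subseteq> C"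
    "\<And>k x. 0 \<le> h k x" "\<And>k x. h k x \<le> 1" "\<And>x. (\<lambda>k. h k x) \<longlonglongrightarrow> indicator U x"
proof -
  obtain K :: "nat \<Rightarrow> 'a set" where K: "\<And>n. compact (K n)" "\<And>n. K n \<subseteq> U"
    and exhaust: "\<And>C. compact C \<Longrightarrow> C \<subseteq> U \<Longrightarrow> \<exists>N. \<forall>n\<ge>N. C \<subseteq> K n"
    using open_Union_compact_subsets[OF U] by metis
  have "\<forall>n. \<exists>g. C1_function g \<and> (\<exists>C. compact C \<and> C \<subseteq> U \<and> {x. g x \<noteq> 0} \<subseteq> C) \<and>
      (\<forall>x\<in>K n. g x = 1) \<and> (\<forall>x. 0 \<le> g x \<and> g x \<le> 1)"
  proof
    fix n
    obtain g V C where "C1_function g" "compact C" "C \<subseteq> U" "{x. g x \<noteq> 0} \<subseteq> C"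
      "open V" "K n \<subseteq> V" "\<And>x. x \<in> V \<Longrightarrow> g x = 1" "\<And>x. 0 \<le> g x" "\<And>x. g x \<le> 1"
      by (rule C1_plateau[OF K(1)[of n] U K(2)[of n]]) blast
    then show "\<exists>g. C1_function g \<and> (\<exists>C. compact C \<and> C \<subseteq> U \<and> {x. g x \<noteq> 0} \<subseteq> C) \<and>
      (\<forall>x\<in>K n. g x = 1) \<and> (\<forall>x. 0 \<le> g x \<and> g x \<le> 1)"
      by blast
  qed
  then obtain h where "\<forall>n. C1_function (h n) \<and> (\<exists>C. compact C \<and> C \<subseteq> U \<and> {x. h n x \<noteq> 0} \<subseteq> C) \<and>
      (\<forall>x\<in>K n. h n x = 1) \<and> (\<forall>x. 0 \<le> h n x \<and> h n x \<le> 1)"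
    by (auto dest: choice)
  then have h: "\<And>n. C1_function (h n)"
    "\<And>n. \<exists>C. compact C \<and> C \<subseteq> U \<and> {x. h n x \<noteq> 0} \<subseteq> C"
    "\<And>n x. x \<in> K n \<Longrightarrow> h n x = 1" "\<And>n x. 0 \<le> h n x" "\<And>n x. h n x \<le> 1"
    by auto
  have "(\<lambda>n. h n x) \<longlonglongrightarrow> indicator U x" for x
  proof (cases "x \<in> U")
    case True
    then have "\<exists>N. \<forall>n\<ge>N. {x} \<subseteq> K n"
      by (intro exhaust) auto
    then obtain N where "\<forall>n\<ge>N. {x} \<subseteq> K n"
      by blast
    then have "\<forall>\<^sub>F n in sequentially. h n x = 1"
      using h(3) by (auto simp: eventually_sequentially)
    with True show ?thesis
      by (simp add: tendsto_eventually)
  next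
    case False
    then have "h n x = 0" for n
      using h(2)[of n] by blast
    with False show ?thesis
      by simp
  qed
  from that[OF h(1,2,4,5) this] show ?thesis .
qed

lemma C1c_if_support_subset:
  assumes "C1_function g" "compact C" "{x. g x \<noteq> 0} \<subseteq> C" "C \<subseteq> U"
  shows "C1c U g"
proof -
  have "closure {x. g x \<noteq> 0} \<subseteq> C"
    using assms(2,3) by (simp add: closure_minimal compact_imp_closed)
  moreover have "compact (closure {x. g x \<noteq> 0})"
    using assms(2,3) by (meson bounded_subset compact_closure compact_imp_bounded)
  ultimately show ?thesis
    using assms(1,4) unfolding C1c_def C1_function_def by blast
qed

section \<open>Measures tested by cut-off functions\<close>

lemma (in complete_measure) borel_measurable_cong_AE:
  fixes f g :: "'a \<Rightarrow> real"
  assumes f: "f \<in> borel_measurable M" and ae: "AE x in M. f x = g x"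
  shows "g \<in> borel_measurable M"
proof (rule measurableI)
  fix B :: "real set" assume B: "B \<in> sets borel"
  have "AE x in M. x \<in> f -` B \<inter> space M \<longleftrightarrow> x \<in> g -` B \<inter> space M"
    using ae by eventually_elim auto
  moreover have "f -` B \<inter> space M \<in> sets M"
    using f B by (rule measurable_sets)
  ultimately show "g -` B \<inter> space M \<in> sets M"
    using in_sets_AE by blast
qed simp

lemma (in complete_measure) integral_cong_AE_complete:
  fixes f g :: "'a \<Rightarrow> real"
  assumes ae: "AE x in M. f x = g x"
  shows "integral\<^sup>L M f = integral\<^sup>L M g"
proof (cases "f \<in> borel_measurable M")
  case True
  show ?thesis
    using integral_cong_AE[OF True borel_measurable_cong_AE[OF True ae] ae] .
next
  case False
  moreover from ae have "AE x in M. g x = f x"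
    by eventually_elim simp
  ultimately have "g \<notin> borel_measurable M"
    using borel_measurable_cong_AE by blast
  with False have "\<not> integrable M f" "\<not> integrable M g"
    using borel_measurable_integrable by blast+
  then show ?thesis
    by (simp add: not_integrable_integral_eq)
qed

lemma (in complete_measure) set_integral_eq_measure_AE:
  fixes g :: "'a \<Rightarrow> real"
  assumes "AE x in M. x \<in> A \<longrightarrow> g x = 1"
  shows "(\<integral>x\<in>A. g x \<partial>M) = measure M (A \<inter> space M)"
proof -
  have "AE x in M. indicator A x *\<^sub>R g x = indicator A x"
    using assms by eventually_elim (auto simp: indicator_def)
  then have "(\<integral>x. indicator A x *\<^sub>R g x \<partial>M) = integral\<^sup>L M (indicator A)"
    by (rule integral_cong_AE_complete)
  then show ?thesis
    unfolding set_lebesgue_integral_def by simp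
qed

lemma set_integral_cong_pointwise:
  fixes f g :: "'a \<Rightarrow> real"
  assumes "\<And>x. x \<in> A \<Longrightarrow> f x = g x"
  shows "(\<integral>x\<in>A. f x \<partial>M) = (\<integral>x\<in>A. g x \<partial>M)"
  unfolding set_lebesgue_integral_def using assms
  by (metis indicator_simps(2) scale_zero_left)

lemma set_integral_tendsto_measure:
  fixes h :: "nat \<Rightarrow> 'a \<Rightarrow> real"
  assumes M: "finite_measure M" and A: "A \<in> sets M" and B: "B \<in> sets M"
    and h: "\<And>k. h k \<in> borel_measurable M" "\<And>k x. \<bar>h k x\<bar> \<le> 1"
    and lim: "\<And>x. (\<lambda>k. h k x) \<longlonglongrightarrow> indicator B x"
  shows "(\<lambda>k. \<integral>x\<in>A. h k x \<partial>M) \<longlonglongrightarrow> measure M (A \<inter> B)"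
proof -
  have "(\<lambda>k. \<integral>x. indicator A x *\<^sub>R h k x \<partial>M) \<longlonglongrightarrow> (\<integral>x. indicator A x *\<^sub>R indicator B x \<partial>M)"
  proof (rule integral_dominated_convergence[where w = "\<lambda>_. 1"])
    show "integrable M (\<lambda>_. 1::real)"
      using M by (rule finite_measure.integrable_const)
    show "AE x in M. (\<lambda>k. indicator A x *\<^sub>R h k x) \<longlonglongrightarrow> indicator A x *\<^sub>R indicator B x"
      using lim by (intro always_eventually allI tendsto_scaleR tendsto_const)
    show "AE x in M. norm (indicator A x *\<^sub>R h k x) \<le> 1" for k
      using h(2) by (intro always_eventually allI) (auto simp: indicator_def)
  qed (use A B h(1) in auto)
  moreover have "(\<lambda>x. indicator A x *\<^sub>R indicator B x :: real) = indicator (A \<inter> B)"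
    by (auto simp: indicator_def)
  ultimately show ?thesis
    using sets.sets_into_space[OF A] unfolding set_lebesgue_integral_def
    by (simp add: Int_absorb2 inf.coboundedI1)
qed

lemma measurable_ident_borel:
  assumes "space L = \<Omega>" "sets (restrict_space borel \<Omega>) \<subseteq> sets L"
  shows "(\<lambda>x. x) \<in> L \<rightarrow>\<^sub>M borel"
proof (rule measurableI)
  fix X :: "'a set" assume "X \<in> sets borel"
  then have "\<Omega> \<inter> X \<in> sets (restrict_space borel \<Omega>)"
    by (auto simp: sets_restrict_space)
  with assms show "(\<lambda>x. x) -` X \<inter> space L \<in> sets L"
    by (auto simp: Int_commute)
qed simp

lemma singular_measures_null_if_agree_on_open:
  fixes M N :: "'a::topological_space measure"
  assumes M: "finite_measure M" "space M = \<Omega>" "sets (restrict_space borel \<Omega>) \<subseteq> sets M"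
    and N: "space N = \<Omega>" "sets (restrict_space borel \<Omega>) \<subseteq> sets N"
    and A: "A \<in> sets M" "A \<in> sets N"
    and P: "P \<in> sets (restrict_space borel \<Omega>)" "emeasure M (\<Omega> - P) = 0" "emeasure N P = 0"
    and agree: "\<And>U. open U \<Longrightarrow> emeasure M (A \<inter> U) = emeasure N (A \<inter> U)"
  shows "emeasure M A = 0"
proof -
  \<comment> \<open>\<open>L\<close> restricted to \<open>A\<close>, moved to the Borel sets so that \<open>M\<close> and \<open>N\<close> can be compared\<close>
  define \<rho> where "\<rho> L = distr (density L (indicator A)) borel (\<lambda>x. x)" for L :: "'a measure"
  have \<rho>: "emeasure (\<rho> L) X = emeasure L (A \<inter> X)"
    if L: "space L = \<Omega>" "sets (restrict_space borel \<Omega>) \<subseteq> sets L" "A \<in> sets L"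
      and X: "X \<in> sets borel" for L X
  proof -
    have "(\<lambda>x. x) \<in> density L (indicator A) \<rightarrow>\<^sub>M borel"
      using measurable_ident_borel[OF L(1,2)] by simp
    moreover have "X \<inter> \<Omega> \<in> sets L"
      using measurable_sets[OF measurable_ident_borel[OF L(1,2)] X] L(1) by simp
    ultimately have "emeasure (\<rho> L) X = emeasure L (A \<inter> (X \<inter> \<Omega>))"
      unfolding \<rho>_def using L by (simp add: emeasure_distr X emeasure_restricted)
    also have "A \<inter> (X \<inter> \<Omega>) = A \<inter> X"
      using sets.sets_into_space[OF L(3)] L(1) by blast
    finally show ?thesis .
  qed
  have "\<rho> M = \<rho> N"
  proof (rule measure_eqI_generator_eq[where E = "{U. open U}" and \<Omega> = UNIV and A = "\<lambda>_. UNIV"])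
    show "Int_stable {U :: 'a set. open U}"
      by (auto simp: Int_stable_def)
    show "sets (\<rho> M) = sigma_sets UNIV {U. open U}" "sets (\<rho> N) = sigma_sets UNIV {U. open U}"
      by (simp_all add: \<rho>_def sets_borel)
    show "emeasure (\<rho> M) U = emeasure (\<rho> N) U" if "U \<in> {U. open U}" for U
      using that \<rho>[OF M(2,3) A(1)] \<rho>[OF N A(2)] agree by simp
    show "emeasure (\<rho> M) UNIV \<noteq> \<infinity>"
      using \<rho>[OF M(2,3) A(1)] finite_measure.emeasure_finite[OF M(1)] by simp
  qed auto
  obtain P' where P': "P' \<in> sets borel" "P = \<Omega> \<inter> P'"
    using P(1) by (auto simp: sets_restrict_space)
  have "emeasure M A = emeasure (\<rho> M) P' + emeasure (\<rho> M) (- P')"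
    using P'(1) \<rho>[OF M(2,3) A(1)] plus_emeasure[of P' "\<rho> M" "- P'"]
    by (simp add: \<rho>_def sets.compl_sets Compl_eq_Diff_UNIV Un_Diff_cancel)
  also have "emeasure (\<rho> M) P' = emeasure N (A \<inter> P')"
    using \<open>\<rho> M = \<rho> N\<close> \<rho>[OF N A(2) P'(1)] by simp
  also have "\<dots> \<le> emeasure N P"
    using P'(2) sets.sets_into_space[OF A(2)] N(1) P(1) N(2)
    by (intro emeasure_mono) auto
  also have "emeasure (\<rho> M) (- P') = emeasure M (A \<inter> - P')"
    using P'(1) \<rho>[OF M(2,3) A(1)] by (simp add: sets.compl_sets Compl_eq_Diff_UNIV)
  also have "\<dots> \<le> emeasure M (\<Omega> - P)"
    using P'(2) sets.sets_into_space[OF A(1)] M(2) P(1) M(3)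
    by (intro emeasure_mono) (auto simp: sets.compl_sets)
  finally show ?thesis
    using P(2,3) by simp
qed

lemma singular_measures_null_if_test_integrals_agree:
  fixes M N :: "'a::euclidean_space measure"
  assumes M: "finite_measure M" "space M = \<Omega>" "sets (restrict_space borel \<Omega>) \<subseteq> sets M"
    and N: "finite_measure N" "space N = \<Omega>" "sets (restrict_space borel \<Omega>) \<subseteq> sets N"
    and A: "A \<in> sets M" "A \<in> sets N"
    and P: "P \<in> sets (restrict_space borel \<Omega>)" "emeasure M (\<Omega> - P) = 0" "emeasure N P = 0"
    and W: "open W" "W \<subseteq> \<Omega>"
    and test: "\<And>h C. C1_function h \<Longrightarrow> compact C \<Longrightarrow> C \<subseteq> W \<Longrightarrow> {x. h x \<noteq> 0} \<subseteq> C \<Longrightarrow>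
                  (\<integral>x\<in>A. h x \<partial>M) = (\<integral>x\<in>A. h x \<partial>N)"
  shows "emeasure M (A \<inter> W) = 0" "emeasure N (A \<inter> W) = 0"
proof -
  have open_sets: "U \<in> sets L"
    if "open U" "U \<subseteq> \<Omega>" "sets (restrict_space borel \<Omega>) \<subseteq> sets L" for U and L :: "'a measure"
    using that by (force simp: sets_restrict_space)
  have AW: "A \<inter> W \<in> sets M" "A \<inter> W \<in> sets N"
    using A open_sets[OF W M(3)] open_sets[OF W N(3)] by auto
  have agree: "emeasure M (A \<inter> W \<inter> U) = emeasure N (A \<inter> W \<inter> U)" if U: "open U" for U
  proof -
    obtain h where h: "\<And>k. C1_function (h k)"
      "\<And>k. \<exists>C. compact C \<and> C \<subseteq> U \<inter> W \<and> {x. h k x \<noteq> 0} \<subseteq> C"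
      "\<And>k x. 0 \<le> h k x" "\<And>k x. h k x \<le> 1" "\<And>x. (\<lambda>k. h k x) \<longlonglongrightarrow> indicator (U \<inter> W) x"
      using C1_approx_indicator_open[of "U \<inter> W"] U W(1) by blast
    have h_bound: "\<bar>h k x\<bar> \<le> 1" for k x
      using h(3,4)[of k x] by simp
    have h_meas: "h k \<in> borel_measurable L"
      if "space L = \<Omega>" "sets (restrict_space borel \<Omega>) \<subseteq> sets L" for k and L :: "'a measure"
      using measurable_compose[OF measurable_ident_borel[OF that]
          borel_measurable_continuous_onI[OF C1_function_imp_continuous_on[OF h(1)]]] by simp
    have UW: "U \<inter> W \<in> sets M" "U \<inter> W \<in> sets N"
      using open_sets[OF _ _ M(3), of "U \<inter> W"] open_sets[OF _ _ N(3), of "U \<inter> W"] U W by auto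
    have "(\<lambda>k. \<integral>x\<in>A. h k x \<partial>M) \<longlonglongrightarrow> measure M (A \<inter> (U \<inter> W))"
      using set_integral_tendsto_measure[OF M(1) A(1) UW(1) h_meas[OF M(2,3)] h_bound h(5)] .
    moreover have "(\<lambda>k. \<integral>x\<in>A. h k x \<partial>N) \<longlonglongrightarrow> measure N (A \<inter> (U \<inter> W))"
      using set_integral_tendsto_measure[OF N(1) A(2) UW(2) h_meas[OF N(2,3)] h_bound h(5)] .
    moreover have "(\<integral>x\<in>A. h k x \<partial>M) = (\<integral>x\<in>A. h k x \<partial>N)" for k
      using h(1,2)[of k] test by blast
    ultimately have "measure M (A \<inter> (U \<inter> W)) = measure N (A \<inter> (U \<inter> W))"
      using LIMSEQ_unique by simp
    with A UW show ?thesis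
      using finite_measure.emeasure_eq_measure[OF M(1)] finite_measure.emeasure_eq_measure[OF N(1)]
      by (simp add: Int_assoc Int_commute Int_left_commute)
  qed
  show "emeasure M (A \<inter> W) = 0"
    by (rule singular_measures_null_if_agree_on_open[OF M N(2,3) AW P agree])
  have "\<Omega> - P \<in> sets (restrict_space borel \<Omega>)"
    using P(1) by (auto simp: sets_restrict_space)
  moreover have "\<Omega> - (\<Omega> - P) = P"
    using P(1) by (auto simp: sets_restrict_space)
  ultimately show "emeasure N (A \<inter> W) = 0"
    using agree P(2,3)
    by (intro singular_measures_null_if_agree_on_open[OF N M(2,3) AW(2,1), of "\<Omega> - P"]) auto
qed

section \<open>Divergence and variation measures\<close>

lemma DM_inf_divergence_measures:
  assumes "DM_inf br deg \<Omega> F mup mun"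
  shows "finite_measure (completion mup)" "space (completion mup) = \<Omega>"
    "sets (restrict_space borel \<Omega>) \<subseteq> sets (completion mup)"
    "finite_measure (completion mun)" "space (completion mun) = \<Omega>"
    "sets (restrict_space borel \<Omega>) \<subseteq> sets (completion mun)"
    "\<exists>P\<in>sets (restrict_space borel \<Omega>). emeasure (completion mup) (\<Omega> - P) = 0 \<and> emeasure (completion mun) P = 0"
proof -
  have M: "space mup = \<Omega>" "sets mup = sets (restrict_space borel \<Omega>)" "finite_measure mup"
    "space mun = \<Omega>" "sets mun = sets (restrict_space borel \<Omega>)" "finite_measure mun"
    and P: "\<exists>P\<in>sets mup. emeasure mup (\<Omega> - P) = 0 \<and> emeasure mun P = 0"
  proof -
    have "sets (restrict_space lborel \<Omega>) = sets (restrict_space borel \<Omega>)"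
      by (rule sets_restrict_space_cong) simp
    with assms show "space mup = \<Omega>" "sets mup = sets (restrict_space borel \<Omega>)" "finite_measure mup"
      "space mun = \<Omega>" "sets mun = sets (restrict_space borel \<Omega>)" "finite_measure mun"
      "\<exists>P\<in>sets mup. emeasure mup (\<Omega> - P) = 0 \<and> emeasure mun P = 0"
      unfolding DM_inf_def by blast+
  qed
  have fin: "finite_measure (completion L)" if "finite_measure L" for L
    using finite_measure.emeasure_finite[OF that] by (intro finite_measureI) simp
  show "finite_measure (completion mup)"
    using fin[OF M(3)] .
  show "finite_measure (completion mun)"
    using fin[OF M(6)] .
  show "space (completion mup) = \<Omega>" "space (completion mun) = \<Omega>"
    "sets (restrict_space borel \<Omega>) \<subseteq> sets (completion mup)"
    "sets (restrict_space borel \<Omega>) \<subseteq> sets (completion mun)"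
    using M by auto
  show "\<exists>P\<in>sets (restrict_space borel \<Omega>). emeasure (completion mup) (\<Omega> - P) = 0 \<and> emeasure (completion mun) P = 0"
  proof -
    obtain P where "P \<in> sets mup" "emeasure mup (\<Omega> - P) = 0" "emeasure mun P = 0"
      using P by blast
    moreover have "\<Omega> - P \<in> sets mup"
      using calculation(1) sets.compl_sets[of P mup] M(1) by simp
    ultimately show ?thesis
      using M(2,5) by (intro bexI[of _ P]) auto
  qed
qed

lemma integral_indicator_hpair_eq_0:
  assumes G: "stratified br deg" and V: "open V" "E \<subseteq> V" and const: "\<And>x. x \<in> V \<Longrightarrow> g x = c"
  shows "(\<integral>x. indicator E x * hpair br deg F g x \<partial>lebesgue) = 0"
proof -
  have "indicator E x * hpair br deg F g x = 0" for x
    using Xd_locally_constant[OF G V(1) _ const] V(2) by (cases "x \<in> E") (auto simp: hpair_def)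
  then have "(\<lambda>x. indicator E x * hpair br deg F g x) = (\<lambda>x. 0)"
    by (rule ext)
  then show ?thesis
    by simp
qed

lemma hvar_indicator_eq_0:
  assumes G: "stratified br deg" and UE: "U \<inter> E = {}"
  shows "hvar br deg (indicator E) U = 0"
proof -
  have "(\<integral>x. indicator E x * hdiv br deg \<phi> x \<partial>lebesgue) = 0" if \<phi>: "C1c_hfield deg U \<phi>" for \<phi>
  proof -
    have "Xd br deg j (\<lambda>y. \<phi> y $ j) x = 0" if "x \<in> E" for j x
    proof (rule Xd_locally_constant[OF G])
      have "closure {y. \<phi> y $ j \<noteq> 0} \<subseteq> U"
        using \<phi> unfolding C1c_hfield_def C1c_def by blast
      moreover have "x \<notin> U"
        using UE \<open>x \<in> E\<close> by blast
      ultimately show "x \<in> - closure {y. \<phi> y $ j \<noteq> 0}"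
        by (meson ComplI subsetD)
      show "\<phi> y $ j = 0" if "y \<in> - closure {y. \<phi> y $ j \<noteq> 0}" for y
        using that closure_subset[of "{y. \<phi> y $ j \<noteq> 0}"] by auto
    qed auto
    then have "indicator E x * hdiv br deg \<phi> x = 0" for x
      by (cases "x \<in> E") (auto simp: hdiv_def)
    then have "(\<lambda>x. indicator E x * hdiv br deg \<phi> x) = (\<lambda>x. 0)"
      by (rule ext)
    then show ?thesis
      by simp
  qed
  then have "hvar br deg (indicator E) U
      = (SUP \<phi>\<in>{\<phi>. C1c_hfield deg U \<phi> \<and> (\<forall>x. norm (\<phi> x) \<le> 1)}. (bot::ennreal))"
    unfolding hvar_def by (intro SUP_cong) (auto simp: bot_ennreal)
  also have "\<dots> = 0"
    unfolding SUP_bot by (simp add: bot_ennreal)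
  finally show ?thesis .
qed

lemma emeasure_hvar_measure_le:
  assumes "X \<in> sets (restrict_space lborel \<Omega>)" "open U" "X \<subseteq> U" "U \<subseteq> \<Omega>"
  shows "emeasure (hvar_measure br deg \<Omega> f) X \<le> hvar br deg f U"
proof -
  have "(INF U\<in>{U. open U \<and> X \<subseteq> U \<and> U \<subseteq> \<Omega>}. hvar br deg f U) \<le> hvar br deg f U"
    using assms by (intro INF_lower) auto
  with assms(1) show ?thesis
    unfolding hvar_measure_def emeasure_measure_of_conv by auto
qed

lemma measure_hvar_measure_eq_0:
  assumes G: "stratified br deg" and \<Omega>: "open \<Omega>" and U: "open U" "U \<inter> E = {}"
  shows "measure (completion (hvar_measure br deg \<Omega> (indicator E))) (U \<inter> \<Omega>) = 0"
proof -
  have UO: "U \<inter> \<Omega> \<in> sets (restrict_space lborel \<Omega>)"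
    using U(1) by (auto simp: sets_restrict_space)
  moreover have "sets (restrict_space lborel \<Omega>) \<subseteq> Pow \<Omega>"
    using sets.space_closed[of "restrict_space lborel \<Omega>"] by (simp add: space_restrict_space)
  ultimately have UH: "U \<inter> \<Omega> \<in> sets (hvar_measure br deg \<Omega> (indicator E))"
    unfolding hvar_measure_def sets_measure_of_conv by auto
  have "emeasure (hvar_measure br deg \<Omega> (indicator E)) (U \<inter> \<Omega>) \<le> hvar br deg (indicator E) (U \<inter> \<Omega>)"
    using U(1) \<Omega> by (intro emeasure_hvar_measure_le[OF UO]) auto
  moreover have "hvar br deg (indicator E) (U \<inter> \<Omega>) = 0"
    using U(2) by (intro hvar_indicator_eq_0[OF G]) auto
  ultimately have "emeasure (hvar_measure br deg \<Omega> (indicator E)) (U \<inter> \<Omega>) = 0"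
    by simp
  with UH show ?thesis
    by (simp add: measure_def)
qed

lemma hom_dist_continuous:
  assumes "hom_dist br deg d"
  shows "continuous_on UNIV (\<lambda>y. d y x)"
proof -
  have "continuous_on UNIV (\<lambda>p. d (fst p) (snd p))"
    using assms unfolding hom_dist_def by blast
  moreover have "continuous_on UNIV (\<lambda>y. (y, x))"
    by (intro continuous_intros)
  ultimately show ?thesis
    using continuous_on_compose2[of UNIV "\<lambda>p. d (fst p) (snd p)" UNIV "\<lambda>y. (y, x)"] by simp
qed

lemma hom_dist_pos:
  assumes "hom_dist br deg d" "y \<noteq> x"
  shows "0 < d y x"
proof -
  have "d y y \<le> d y x + d x y" "d y y = 0" "d x y = d y x" "d y x \<noteq> 0"
    using assms unfolding hom_dist_def by blast+
  then show ?thesis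
    by linarith
qed

lemma red_bdry_subset:
  assumes d_cont: "\<And>x. continuous_on UNIV (\<lambda>y. d y x)" and d_pos: "\<And>x y. y \<noteq> x \<Longrightarrow> 0 < d y x"
    and K: "compact K" and null: "\<And>U. open U \<Longrightarrow> U \<inter> K = {} \<Longrightarrow> measure lam (U \<inter> \<Omega>) = 0"
  shows "red_bdry \<Omega> d lam \<nu> \<subseteq> K"
proof
  fix x assume x: "x \<in> red_bdry \<Omega> d lam \<nu>"
  show "x \<in> K"
  proof (rule ccontr)
    assume "x \<notin> K"
    obtain r where r: "r > 0" "\<And>y. y \<in> K \<Longrightarrow> r \<le> d y x"
    proof (cases "K = {}")
      case False
      then obtain y0 where "y0 \<in> K" "\<forall>y\<in>K. d y0 x \<le> d y x"
        using continuous_attains_inf[OF K False continuous_on_subset[OF d_cont]] by blast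
      moreover have "0 < d y0 x"
        using d_pos \<open>x \<notin> K\<close> calculation(1) by metis
      ultimately show ?thesis
        using that[of "d y0 x"] by blast
    qed (use that[of 1] in simp)
    have "open {y. d y x < r}"
      using open_Collect_less[OF d_cont continuous_on_const] by simp
    moreover have "{y. d y x < r} \<inter> K = {}"
      using r(2) by force
    ultimately have "measure lam ({y. d y x < r} \<inter> \<Omega>) = 0"
      by (rule null)
    with x r(1) show False
      unfolding red_bdry_def by force
  qed
qed

section \<open>Testing the trace identities\<close>

lemma trace_identity_null_outside:
  fixes L :: "(real^'n::finite) measure"
  assumes G: "stratified br deg" and \<Omega>: "open \<Omega>" and F: "DM_inf br deg \<Omega> F mup mun"
    and K: "compact K" "K \<subseteq> \<Omega>" "E \<subseteq> K" and R: "R \<subseteq> K"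
    and E1: "E1 \<in> sets (completion mup)" "E1 \<in> sets (completion mun)"
    and trace: "\<And>g. C1c \<Omega> g \<Longrightarrow>
         - (\<integral>x. indicator E x * hpair br deg F g x \<partial>lebesgue)
           = (\<integral>x\<in>E1. g x \<partial>completion mup) - (\<integral>x\<in>E1. g x \<partial>completion mun) - (\<integral>x\<in>R. g x * T x \<partial>L)"
  shows "E1 - K \<in> null_sets (completion mup)" "E1 - K \<in> null_sets (completion mun)"
proof -
  note div = DM_inf_divergence_measures[OF F]
  obtain P where P: "P \<in> sets (restrict_space borel \<Omega>)"
    "emeasure (completion mup) (\<Omega> - P) = 0" "emeasure (completion mun) P = 0"
    using div(7) by blast
  have W: "open (\<Omega> - K)" "\<Omega> - K \<subseteq> \<Omega>"
    using \<Omega> K(1) by (auto intro: compact_imp_closed)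
  have test: "(\<integral>x\<in>E1. h x \<partial>completion mup) = (\<integral>x\<in>E1. h x \<partial>completion mun)"
    if h: "C1_function h" "compact C" "C \<subseteq> \<Omega> - K" "{x. h x \<noteq> 0} \<subseteq> C" for h C
  proof -
    have "(\<integral>x. indicator E x * hpair br deg F h x \<partial>lebesgue) = 0"
      using h K(3) by (intro integral_indicator_hpair_eq_0[OF G, of "- C" _ _ 0]) (auto intro: compact_imp_closed)
    moreover have "(\<integral>x\<in>R. h x * T x \<partial>L) = (\<integral>x\<in>R. 0 \<partial>L)"
      using h(3,4) R by (intro set_integral_cong_pointwise) auto
    moreover have "C \<subseteq> \<Omega>"
      using h(3) by blast
    ultimately show ?thesis
      using trace[OF C1c_if_support_subset[OF h(1,2,4)]] by (simp add: set_lebesgue_integral_def)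
  qed
  have "E1 - K = E1 \<inter> (\<Omega> - K)"
    using sets.sets_into_space[OF E1(1)] div(2) by auto
  moreover have "emeasure (completion mup) (E1 \<inter> (\<Omega> - K)) = 0" "emeasure (completion mun) (E1 \<inter> (\<Omega> - K)) = 0"
    by (rule singular_measures_null_if_test_integrals_agree[OF div(1-6) E1 P W test]; assumption)+
  moreover have "\<Omega> - K \<in> sets (restrict_space borel \<Omega>)"
    unfolding sets_restrict_space using W(1) by (intro image_eqI[of _ _ "\<Omega> - K"]) auto
  then have "E1 \<inter> (\<Omega> - K) \<in> sets (completion mup)" "E1 \<inter> (\<Omega> - K) \<in> sets (completion mun)"
    using E1 div(3,6) by auto
  ultimately show "E1 - K \<in> null_sets (completion mup)" "E1 - K \<in> null_sets (completion mun)"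
    by auto
qed

lemma trace_identity_imp_mass_eq:
  fixes L :: "(real^'n::finite) measure"
  assumes G: "stratified br deg" and \<Omega>: "open \<Omega>" and F: "DM_inf br deg \<Omega> F mup mun"
    and K: "compact K" "K \<subseteq> \<Omega>" "E \<subseteq> K" and R: "R \<subseteq> K" and S: "S \<subseteq> \<Omega>"
    and null: "S - K \<in> null_sets (completion mup)" "S - K \<in> null_sets (completion mun)"
    and trace: "\<And>g. C1c \<Omega> g \<Longrightarrow>
         - (\<integral>x. indicator E x * hpair br deg F g x \<partial>lebesgue)
           = (\<integral>x\<in>S. g x \<partial>completion mup) - (\<integral>x\<in>S. g x \<partial>completion mun) - (\<integral>x\<in>R. g x * T x \<partial>L)"
  shows "measure (completion mup) S - measure (completion mun) S = (\<integral>x\<in>R. T x \<partial>L)"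
proof -
  note div = DM_inf_divergence_measures[OF F]
  obtain g V C where g: "C1_function g" "compact C" "C \<subseteq> \<Omega>" "{x. g x \<noteq> 0} \<subseteq> C"
    "open V" "K \<subseteq> V" "\<And>x. x \<in> V \<Longrightarrow> g x = 1"
    by (rule C1_plateau[OF K(1) \<Omega> K(2)]) blast
  have "(\<integral>x. indicator E x * hpair br deg F g x \<partial>lebesgue) = 0"
    using g(6,7) K(3) by (intro integral_indicator_hpair_eq_0[OF G g(5)]) auto
  moreover have "(\<integral>x\<in>S. g x \<partial>completion M) = measure (completion M) S"
    if "space M = \<Omega>" "S - K \<in> null_sets (completion M)" for M
  proof -
    have "AE x in completion M. x \<in> S \<longrightarrow> g x = 1"
      using AE_not_in[OF that(2)] by eventually_elim (use g(6,7) in auto)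
    then show ?thesis
      using S that(1) by (simp add: completion.set_integral_eq_measure_AE Int_absorb2)
  qed
  moreover have "(\<integral>x\<in>R. g x * T x \<partial>L) = (\<integral>x\<in>R. T x \<partial>L)"
    using R g(6,7) by (intro set_integral_cong_pointwise) auto
  ultimately show ?thesis
    using trace[OF C1c_if_support_subset[OF g(1,2,4,3)]] null div(2,5) by simp
qed

theorem mainTheorem17:
  fixes br :: "real^'n::finite \<Rightarrow> real^'n \<Rightarrow> real^'n" and deg :: "'n \<Rightarrow> nat"
    and d :: "real^'n \<Rightarrow> real^'n \<Rightarrow> real"
    and \<Omega> E E1 :: "(real^'n) set"
    and F \<nu> :: "real^'n \<Rightarrow> real^'n"
    and mup mun :: "(real^'n) measure"
    and Tri Tre :: "real^'n \<Rightarrow> real"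
  assumes G: "stratified br deg"
    and dist: "hom_dist br deg d"
    and \<Omega>: "open \<Omega>"
    and F: "DM_inf br deg \<Omega> F mup mun"
    and Emeas: "E \<in> sets lebesgue"
    and Ecpt: "compact (closure E)" "closure E \<subseteq> \<Omega>"
    and Eper: "hvar br deg (indicator E) \<Omega> < \<infinity>"
    and nu_meas: "\<nu> \<in> borel_measurable (completion (hvar_measure br deg \<Omega> (indicator E)))"
    and nu_unit: "AE x in hvar_measure br deg \<Omega> (indicator E). horizontal deg (\<nu> x) \<and> norm (\<nu> x) = 1"
    and nu_GG: "\<And>\<phi>. C1c_hfield deg \<Omega> \<phi> \<Longrightarrow>
         (\<integral>x. indicator E x * hdiv br deg \<phi> x \<partial>lebesgue)
           = (\<integral>x. \<phi> x \<bullet> \<nu> x \<partial>completion (hvar_measure br deg \<Omega> (indicator E)))"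
    and E1_sub: "E1 \<subseteq> \<Omega> - red_bdry \<Omega> d (completion (hvar_measure br deg \<Omega> (indicator E))) \<nu>"
    and E1_meas: "E1 \<in> sets (completion mup)" "E1 \<in> sets (completion mun)"
    and Tri_meas: "Tri \<in> borel_measurable (completion (hvar_measure br deg \<Omega> (indicator E)))"
    and Tre_meas: "Tre \<in> borel_measurable (completion (hvar_measure br deg \<Omega> (indicator E)))"
    and Tri_bdd: "\<exists>C. AE x in hvar_measure br deg \<Omega> (indicator E).
                    x \<in> red_bdry \<Omega> d (completion (hvar_measure br deg \<Omega> (indicator E))) \<nu> \<longrightarrow> \<bar>Tri x\<bar> \<le> C"
    and Tre_bdd: "\<exists>C. AE x in hvar_measure br deg \<Omega> (indicator E).
                    x \<in> red_bdry \<Omega> d (completion (hvar_measure br deg \<Omega> (indicator E))) \<nu> \<longrightarrow> \<bar>Tre x\<bar> \<le> C"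
    and int_trace: "\<And>g. C1c \<Omega> g \<Longrightarrow>
         - (\<integral>x. indicator E x * hpair br deg F g x \<partial>lebesgue)
           = (\<integral>x\<in>E1. g x \<partial>completion mup) - (\<integral>x\<in>E1. g x \<partial>completion mun)
             - (\<integral>x\<in>red_bdry \<Omega> d (completion (hvar_measure br deg \<Omega> (indicator E))) \<nu>.
                   g x * Tri x \<partial>completion (hvar_measure br deg \<Omega> (indicator E)))"
    and ext_trace: "\<And>g. C1c \<Omega> g \<Longrightarrow>
         - (\<integral>x. indicator E x * hpair br deg F g x \<partial>lebesgue)
           = (\<integral>x\<in>E1 \<union> red_bdry \<Omega> d (completion (hvar_measure br deg \<Omega> (indicator E))) \<nu>. g x \<partial>completion mup)
             - (\<integral>x\<in>E1 \<union> red_bdry \<Omega> d (completion (hvar_measure br deg \<Omega> (indicator E))) \<nu>. g x \<partial>completion mun)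
             - (\<integral>x\<in>red_bdry \<Omega> d (completion (hvar_measure br deg \<Omega> (indicator E))) \<nu>.
                   g x * Tre x \<partial>completion (hvar_measure br deg \<Omega> (indicator E)))"
  shows "(measure (completion mup) E1 - measure (completion mun) E1
           = (\<integral>x\<in>red_bdry \<Omega> d (completion (hvar_measure br deg \<Omega> (indicator E))) \<nu>.
                Tri x \<partial>completion (hvar_measure br deg \<Omega> (indicator E))) \<and>
         measure (completion mup) (E1 \<union> red_bdry \<Omega> d (completion (hvar_measure br deg \<Omega> (indicator E))) \<nu>)
           - measure (completion mun) (E1 \<union> red_bdry \<Omega> d (completion (hvar_measure br deg \<Omega> (indicator E))) \<nu>)
           = (\<integral>x\<in>red_bdry \<Omega> d (completion (hvar_measure br deg \<Omega> (indicator E))) \<nu>.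
                Tre x \<partial>completion (hvar_measure br deg \<Omega> (indicator E))))"
proof -
  let ?L = "completion (hvar_measure br deg \<Omega> (indicator E))"
  let ?R = "red_bdry \<Omega> d ?L \<nu>"
  have K: "compact (closure E)" "closure E \<subseteq> \<Omega>" "E \<subseteq> closure E"
    using Ecpt closure_subset by auto
  have R: "?R \<subseteq> closure E"
  proof (rule red_bdry_subset[OF hom_dist_continuous[OF dist] hom_dist_pos[OF dist] K(1)])
    show "measure ?L (U \<inter> \<Omega>) = 0" if "open U" "U \<inter> closure E = {}" for U
      using that K(3) by (intro measure_hvar_measure_eq_0[OF G \<Omega>]) auto
  qed
  have E1: "E1 \<subseteq> \<Omega>" "E1 \<union> ?R \<subseteq> \<Omega>" "E1 \<union> ?R - closure E = E1 - closure E"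
    using E1_sub R K(2) by auto
  have null: "E1 - closure E \<in> null_sets (completion mup)" "E1 - closure E \<in> null_sets (completion mun)"
    using trace_identity_null_outside[OF G \<Omega> F K R E1_meas int_trace] by blast+
  show ?thesis
    using trace_identity_imp_mass_eq[OF G \<Omega> F K R E1(1) null int_trace]
      trace_identity_imp_mass_eq[OF G \<Omega> F K R E1(2) null[folded E1(3)] ext_trace]
    by blast
qed

end
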